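(* Let $\mathbf{\Pi}=\langle\mathit{PF},\Pi\rangle$ be a multi-valued probabilistic program such that $\mathrm{SM}''[\mathbf{\Pi}]$ is not empty and $M_{\mathbf{\Pi}}(c=v)>0$ for every probabilistic constant $c$ and every $v\in\mathrm{Dom}(c)$. Then for every interpretation $I$, $I$ is a (probabilistic) stable model of $T(\mathbf{\Pi})$ if and only if $I\in\mathrm{SM}''[\mathbf{\Pi}]$.
   Context: Stable model semantics: a rule is $A\leftarrow B\wedge N$ ($A$ a possibly empty disjunction of atoms, $B$ a conjunction of atoms, $N$ a formula with every atom occurrence under negation); the reduct $\Pi^I$ of a ground program keeps $A\leftarrow B$ for rules with $I\models N$; $I$ (a set of atoms) is a stable model if it is a minimal model of $\Pi^I$. An $\mathrm{LP}^{\mathrm{MLN}}$ program $\Pi$ is a finite set of weighted rules $w:R$, $w$ real or the symbol $\alpha$; $\Pi_I=\{w:R\in\Pi\mid I\models R\}$; $\mathrm{SM}[\Pi]=\{I\mid I$ stable model of the unweighted $\Pi_I\}$; with $\alpha$ a real parameter, $W_\Pi(I)=\exp(\sum_{w:R\in\Pi_I}w)$ if $I\in\mathrm{SM}[\Pi]$, else $0$; $P_\Pi(I)=\lim_{\alpha\to\infty}W_\Pi(I)/\sum_{J\in\mathrm{SM}[\Pi]}W_\Pi(J)$; $I$ is a (probabilistic) stable model of $\Pi$ if $P_\Pi(I)\neq0$. Multi-valued signature: constants $c$ with finite domains $\mathrm{Dom}(c)$; atoms $c=v$; constants are probabilistic or regular. A multi-valued probabilistic program $\mathbf{\Pi}=\langle\mathit{PF},\Pi\rangle$: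 $\mathit{PF}$ has, for each probabilistic constant $c$, one declaration $p_1:c=v_1\mid\dots\mid p_n:c=v_n$ ($\{v_i\}=\mathrm{Dom}(c)$ distinct, $p_i\in[0,1]$, $\sum p_i=1$), and $M_{\mathbf{\Pi}}(c=v_i)=p_i$; $\Pi$ is a set of rules whose heads contain no atom of a probabilistic constant. $T(\mathbf{\Pi})$ is the $\mathrm{LP}^{\mathrm{MLN}}$ program containing: $\ln(p_i):c=v_i$ if $0<p_i<1$, $\alpha:c=v_i$ if $p_i=1$, $\alpha:\bot\leftarrow c=v_i$ if $p_i=0$; $\alpha:R$ for $R\in\Pi$; $\alpha:\bot\leftarrow c=v_1\wedge c=v_2$ for every constant $c$ and distinct $v_1,v_2\in\mathrm{Dom}(c)$; $\alpha:\bot\leftarrow\neg\bigvee_{v\in\mathrm{Dom}(c)}c=v$ for every probabilistic $c$. $I$ is consistent if it satisfies the last two kinds of constraints; $\mathit{TC}(I)=\{c=v\in I\mid c$ probabilistic$\}$; $\mathrm{SM}''[\mathbf{\Pi}]$ is the set of consistent $I$ that are stable models of $\Pi\cup\mathit{TC}(I)$. *)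

theory Defs
  imports Complex_Main
begin

datatype 'a fm = Atom 'a | Top | Bot | Neg "'a fm" | Conj "'a fm" "'a fm"
  | Disj "'a fm" "'a fm" | Imp "'a fm" "'a fm"

fun fsat :: "'a set \<Rightarrow> 'a fm \<Rightarrow> bool" where
  "fsat I (Atom a) = (a \<in> I)"
| "fsat I Top = True"
| "fsat I Bot = False"
| "fsat I (Neg f) = (\<not> fsat I f)"
| "fsat I (Conj f g) = (fsat I f \<and> fsat I g)"
| "fsat I (Disj f g) = (fsat I f \<or> fsat I g)"
| "fsat I (Imp f g) = (fsat I f \<longrightarrow> fsat I g)"

fun neg_guarded :: "'a fm \<Rightarrow> bool" where
  "neg_guarded (Atom a) = False"
| "neg_guarded Top = True"
| "neg_guarded Bot = True"
| "neg_guarded (Neg f) = True"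
| "neg_guarded (Conj f g) = (neg_guarded f \<and> neg_guarded g)"
| "neg_guarded (Disj f g) = (neg_guarded f \<and> neg_guarded g)"
| "neg_guarded (Imp f g) = (neg_guarded f \<and> neg_guarded g)"

fun disj_list :: "'a fm list \<Rightarrow> 'a fm" where
  "disj_list [] = Bot"
| "disj_list (f # fs) = Disj f (disj_list fs)"

text \<open>A rule  A \<leftarrow> B \<and> N : head A (disjunction of the atoms in the set),
  positive body B (conjunction of the atoms in the set), negative part N.\<close>
datatype 'a rule = Rule (head: "'a set") (pbody: "'a set") (nbody: "'a fm")

definition wf_rule :: "'a rule \<Rightarrow> bool" where
  "wf_rule R \<longleftrightarrow> finite (head R) \<and> finite (pbody R) \<and> neg_guarded (nbody R)"

definition rsat :: "'a set \<Rightarrow> 'a rule \<Rightarrow> bool" where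
  "rsat I R \<longleftrightarrow> (pbody R \<subseteq> I \<and> fsat I (nbody R) \<longrightarrow> head R \<inter> I \<noteq> {})"

text \<open>Reduct: positive rules (A, B) standing for A \<leftarrow> B.\<close>
definition reduct :: "'a rule set \<Rightarrow> 'a set \<Rightarrow> ('a set \<times> 'a set) set" where
  "reduct P I = {(head R, pbody R) | R. R \<in> P \<and> fsat I (nbody R)}"

definition pmodel :: "('a set \<times> 'a set) set \<Rightarrow> 'a set \<Rightarrow> bool" where
  "pmodel Q J \<longleftrightarrow> (\<forall>(A, B) \<in> Q. B \<subseteq> J \<longrightarrow> A \<inter> J \<noteq> {})"

definition minimal_model :: "('a set \<times> 'a set) set \<Rightarrow> 'a set \<Rightarrow> bool" where
  "minimal_model Q I \<longleftrightarrow> pmodel Q I \<and> (\<forall>J. J \<subset> I \<longrightarrow> \<not> pmodel Q J)"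

definition stable_model :: "'a rule set \<Rightarrow> 'a set \<Rightarrow> bool" where
  "stable_model P I \<longleftrightarrow> minimal_model (reduct P I) I"

datatype weight = W real | Alpha

fun wval :: "real \<Rightarrow> weight \<Rightarrow> real" where
  "wval a (W r) = r"
| "wval a Alpha = a"

definition lpmln_program :: "(weight \<times> 'a rule) set \<Rightarrow> bool" where
  "lpmln_program P \<longleftrightarrow> finite P \<and> (\<forall>(w, R) \<in> P. wf_rule R)"

definition sat_part :: "(weight \<times> 'a rule) set \<Rightarrow> 'a set \<Rightarrow> (weight \<times> 'a rule) set" where
  "sat_part P I = {(w, R) \<in> P. rsat I R}"

definition SM :: "(weight \<times> 'a rule) set \<Rightarrow> 'a set set" where
  "SM P = {I. stable_model (snd ` sat_part P I) I}"

text \<open>Unnormalised weight, with \<alpha> instantiated by the real parameter a.\<close>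
definition Wt :: "(weight \<times> 'a rule) set \<Rightarrow> real \<Rightarrow> 'a set \<Rightarrow> real" where
  "Wt P a I = (if I \<in> SM P then exp (\<Sum>(w, R) \<in> sat_part P I. wval a w) else 0)"

definition Prob :: "(weight \<times> 'a rule) set \<Rightarrow> 'a set \<Rightarrow> real" where
  "Prob P I = Lim at_top (\<lambda>a. Wt P a I / (\<Sum>J \<in> SM P. Wt P a J))"

definition prob_stable_model :: "(weight \<times> 'a rule) set \<Rightarrow> 'a set \<Rightarrow> bool" where
  "prob_stable_model P I \<longleftrightarrow> Prob P I \<noteq> 0"

text \<open>Signature: constants Cs, probabilistic ones Pc \<subseteq> Cs, domains Dom.
  Atom c = v is the pair (c, v).  The declarations PF are given by pr:
  the declaration for probabilistic c is  pr c v1 : c = v1 | ... | pr c vn : c = vn.\<close>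

definition sig_atoms :: "'c set \<Rightarrow> ('c \<Rightarrow> 'v set) \<Rightarrow> ('c \<times> 'v) set" where
  "sig_atoms Cs Dom = {(c, v). c \<in> Cs \<and> v \<in> Dom c}"

fun fm_atoms :: "'a fm \<Rightarrow> 'a set" where
  "fm_atoms (Atom a) = {a}"
| "fm_atoms Top = {}"
| "fm_atoms Bot = {}"
| "fm_atoms (Neg f) = fm_atoms f"
| "fm_atoms (Conj f g) = fm_atoms f \<union> fm_atoms g"
| "fm_atoms (Disj f g) = fm_atoms f \<union> fm_atoms g"
| "fm_atoms (Imp f g) = fm_atoms f \<union> fm_atoms g"

definition rule_atoms :: "'a rule \<Rightarrow> 'a set" where
  "rule_atoms R = head R \<union> pbody R \<union> fm_atoms (nbody R)"

definition mv_prob_program ::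
  "'c set \<Rightarrow> 'c set \<Rightarrow> ('c \<Rightarrow> 'v set) \<Rightarrow> ('c \<Rightarrow> 'v \<Rightarrow> real) \<Rightarrow> ('c \<times> 'v) rule set \<Rightarrow> bool" where
  "mv_prob_program Cs Pc Dom pr Pi \<longleftrightarrow>
     finite Cs \<and> Pc \<subseteq> Cs \<and> (\<forall>c \<in> Cs. finite (Dom c)) \<and>
     (\<forall>c \<in> Pc. (\<forall>v \<in> Dom c. 0 \<le> pr c v \<and> pr c v \<le> 1) \<and> (\<Sum>v \<in> Dom c. pr c v) = 1) \<and>
     finite Pi \<and>
     (\<forall>R \<in> Pi. wf_rule R \<and> rule_atoms R \<subseteq> sig_atoms Cs Dom \<and>
                (\<forall>(c, v) \<in> head R. c \<notin> Pc))"

definition fact :: "'a \<Rightarrow> 'a rule" where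
  "fact a = Rule {a} {} Top"

definition constraint :: "'a set \<Rightarrow> 'a fm \<Rightarrow> 'a rule" where
  "constraint B N = Rule {} B N"

definition dom_list :: "('c \<Rightarrow> 'v set) \<Rightarrow> 'c \<Rightarrow> 'v list" where
  "dom_list Dom c = (SOME vs. set vs = Dom c \<and> distinct vs)"

definition uniq_constraints :: "'c set \<Rightarrow> ('c \<Rightarrow> 'v set) \<Rightarrow> ('c \<times> 'v) rule set" where
  "uniq_constraints Cs Dom =
     {constraint {(c, v1), (c, v2)} Top | c v1 v2. c \<in> Cs \<and> v1 \<in> Dom c \<and> v2 \<in> Dom c \<and> v1 \<noteq> v2}"

definition exist_constraints :: "'c set \<Rightarrow> ('c \<Rightarrow> 'v set) \<Rightarrow> ('c \<times> 'v) rule set" where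
  "exist_constraints Pc Dom =
     {constraint {} (Neg (disj_list (map (\<lambda>v. Atom (c, v)) (dom_list Dom c)))) | c. c \<in> Pc}"

definition T_trans ::
  "'c set \<Rightarrow> 'c set \<Rightarrow> ('c \<Rightarrow> 'v set) \<Rightarrow> ('c \<Rightarrow> 'v \<Rightarrow> real) \<Rightarrow> ('c \<times> 'v) rule set
   \<Rightarrow> (weight \<times> ('c \<times> 'v) rule) set" where
  "T_trans Cs Pc Dom pr Pi =
     {(W (ln (pr c v)), fact (c, v)) | c v. c \<in> Pc \<and> v \<in> Dom c \<and> 0 < pr c v \<and> pr c v < 1}
   \<union> {(Alpha, fact (c, v)) | c v. c \<in> Pc \<and> v \<in> Dom c \<and> pr c v = 1}
   \<union> {(Alpha, constraint {(c, v)} Top) | c v. c \<in> Pc \<and> v \<in> Dom c \<and> pr c v = 0}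
   \<union> {(Alpha, R) | R. R \<in> Pi}
   \<union> {(Alpha, R) | R. R \<in> uniq_constraints Cs Dom}
   \<union> {(Alpha, R) | R. R \<in> exist_constraints Pc Dom}"

definition consistent :: "'c set \<Rightarrow> 'c set \<Rightarrow> ('c \<Rightarrow> 'v set) \<Rightarrow> ('c \<times> 'v) set \<Rightarrow> bool" where
  "consistent Cs Pc Dom I \<longleftrightarrow>
     (\<forall>R \<in> uniq_constraints Cs Dom \<union> exist_constraints Pc Dom. rsat I R)"

definition TC :: "'c set \<Rightarrow> ('c \<times> 'v) set \<Rightarrow> ('c \<times> 'v) set" where
  "TC Pc I = {(c, v) \<in> I. c \<in> Pc}"

definition SM2 :: "'c set \<Rightarrow> 'c set \<Rightarrow> ('c \<Rightarrow> 'v set) \<Rightarrow> ('c \<times> 'v) rule set \<Rightarrow> ('c \<times> 'v) set set" where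
  "SM2 Cs Pc Dom Pi = {I. consistent Cs Pc Dom I \<and> stable_model (Pi \<union> fact ` TC Pc I) I}"

end

theory Submission
  imports Defs
begin

text \<open>The weight of a stable model \<open>I\<close> of an \<open>LP\<^sup>M\<^sup>L\<^sup>N\<close> program is
  \<open>exp (\<alpha> h(I) + s(I))\<close>, where \<open>h(I)\<close> counts the satisfied \<open>\<alpha>\<close>-rules and \<open>s(I)\<close> sums the
  real weights of the satisfied soft rules; as \<open>\<alpha> \<rightarrow> \<infinity>\<close> the normalised weight of \<open>I\<close> has a
  positive limit exactly when \<open>h(I)\<close> is maximal among all stable models.
  Since every probability is positive, the \<open>\<alpha>\<close>-rules of \<open>T(\<Pi>)\<close> are \<open>\<Pi>\<close>, the consistency
  constraints and the facts of probability 1, which consistency already forces; so an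
  interpretation satisfies all of them iff it is a consistent model of \<open>\<Pi>\<close>. For such \<open>I\<close> the
  satisfied facts of \<open>T(\<Pi>)\<close> are \<open>TC(I)\<close> and the satisfied constraints do not affect
  stability, so \<open>I \<in> SM[T(\<Pi>)]\<close> iff \<open>I\<close> is stable for \<open>\<Pi> \<union> TC(I)\<close>. Finally, a member of
  \<open>SM''[\<Pi>]\<close> cut down to the signature shows that the maximum of \<open>h\<close> is attained.\<close>

section \<open>Normalised weights in the limit\<close>

lemma tendsto_exp_affine_at_top_neg:
  fixes d e :: real
  assumes "d < 0"
  shows "((\<lambda>a. exp (a * d + e)) \<longlongrightarrow> 0) at_top"
proof -
  have "filterlim (\<lambda>a. a * d) at_bot at_top"
    using filterlim_tendsto_neg_mult_at_bot[OF tendsto_const[of d] _ filterlim_ident] assms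
    by (simp add: mult.commute)
  then have "filterlim (\<lambda>a. a * d + e) at_bot at_top"
    using filterlim_tendsto_add_at_bot_iff[OF tendsto_const[of e], of "\<lambda>a. a * d" at_top]
    by (simp add: add.commute)
  then show ?thesis
    by (rule filterlim_compose[OF exp_at_bot])
qed

lemma tendsto_softmax_at_top:
  fixes k c :: "'a \<Rightarrow> real"
  assumes fin: "finite S" and J0: "J0 \<in> S" and J0_max: "\<forall>J\<in>S. k J \<le> k J0" and I: "I \<in> S"
  defines "L J \<equiv> if k J = k J0 then exp (c J) else 0"
  shows "((\<lambda>a. exp (a * k I + c I) / (\<Sum>J\<in>S. exp (a * k J + c J))) \<longlongrightarrow> L I / sum L S) at_top"
    and "sum L S > 0"
proof -
  show pos: "sum L S > 0"
    by (rule sum_pos2[OF fin J0]) (auto simp: L_def)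
  have lim: "((\<lambda>a. exp (a * (k J - k J0) + c J)) \<longlongrightarrow> L J) at_top" if "J \<in> S" for J
  proof (cases "k J = k J0")
    case False
    with J0_max that have "k J - k J0 < 0" by force
    with False show ?thesis by (simp add: L_def tendsto_exp_affine_at_top_neg)
  qed (simp add: L_def)
  have rescale: "exp (a * k J + c J) = exp (a * k J0) * exp (a * (k J - k J0) + c J)" for a J
    by (simp add: exp_add[symmetric] algebra_simps)
  have "((\<lambda>a. exp (a * (k I - k J0) + c I) / (\<Sum>J\<in>S. exp (a * (k J - k J0) + c J)))
      \<longlongrightarrow> L I / sum L S) at_top"
    using pos by (intro tendsto_divide lim[OF I] tendsto_sum lim) auto
  then show "((\<lambda>a. exp (a * k I + c I) / (\<Sum>J\<in>S. exp (a * k J + c J))) \<longlongrightarrow> L I / sum L S) at_top"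
    by (simp add: rescale sum_distrib_left[symmetric])
qed

definition hard_rules :: "(weight \<times> 'a rule) set \<Rightarrow> 'a rule set" where
  "hard_rules P = {R. (Alpha, R) \<in> P}"

definition hard_count :: "(weight \<times> 'a rule) set \<Rightarrow> 'a set \<Rightarrow> nat" where
  "hard_count P I = card (hard_rules (sat_part P I))"

definition soft_weight :: "(weight \<times> 'a rule) set \<Rightarrow> 'a set \<Rightarrow> real" where
  "soft_weight P I = (\<Sum>(w, R) \<in> sat_part P I. wval 0 w)"

lemma finite_hard_rules:
  assumes "finite P"
  shows "finite (hard_rules P)"
proof -
  have "finite (Pair Alpha -` P)"
    using assms by (rule finite_vimageI) (simp add: inj_on_def)
  then show ?thesis
    by (simp add: hard_rules_def vimage_def)
qed

lemma hard_rules_sat_part: "hard_rules (sat_part P I) = {R \<in> hard_rules P. rsat I R}"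
  by (auto simp: hard_rules_def sat_part_def)

lemma snd_image_sat_part: "snd ` sat_part P I = {R \<in> snd ` P. rsat I R}"
  unfolding sat_part_def by force

lemma sum_wval_sat_part:
  assumes "finite P"
  shows "(\<Sum>(w, R) \<in> sat_part P I. wval a w) = a * hard_count P I + soft_weight P I"
proof -
  let ?S = "sat_part P I"
  have fin: "finite ?S"
    using assms finite_subset[of ?S P] by (auto simp: sat_part_def)
  have wval_split: "wval a w = (if w = Alpha then a else 0) + wval 0 w" for w
    by (cases w) auto
  have "{x \<in> ?S. fst x = Alpha} = Pair Alpha ` hard_rules ?S"
    by (auto simp: hard_rules_def)
  then have "card {x \<in> ?S. fst x = Alpha} = hard_count P I"
    by (simp add: hard_count_def card_image inj_on_def)
  moreover have "(\<Sum>x\<in>?S. if fst x = Alpha then a else 0) = a * card {x \<in> ?S. fst x = Alpha}"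
    using fin by (simp add: sum.inter_filter[symmetric])
  ultimately show ?thesis
    by (simp add: soft_weight_def case_prod_beta wval_split sum.distrib)
qed

lemma Wt_eq_exp:
  "finite P \<Longrightarrow> I \<in> SM P \<Longrightarrow> Wt P a I = exp (a * hard_count P I + soft_weight P I)"
  by (simp add: Wt_def sum_wval_sat_part)

lemma hard_count_le: "finite P \<Longrightarrow> hard_count P I \<le> card (hard_rules P)"
  unfolding hard_count_def hard_rules_sat_part by (intro card_mono finite_hard_rules) auto

lemma hard_count_eq_card_iff:
  assumes "finite P"
  shows "hard_count P I = card (hard_rules P) \<longleftrightarrow> (\<forall>R\<in>hard_rules P. rsat I R)"
proof
  assume "hard_count P I = card (hard_rules P)"
  then have "{R \<in> hard_rules P. rsat I R} = hard_rules P"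
    unfolding hard_count_def hard_rules_sat_part
    by (intro card_subset_eq finite_hard_rules assms) auto
  then show "\<forall>R\<in>hard_rules P. rsat I R" by blast
next
  assume "\<forall>R\<in>hard_rules P. rsat I R"
  then have "{R \<in> hard_rules P. rsat I R} = hard_rules P" by blast
  then show "hard_count P I = card (hard_rules P)"
    unfolding hard_count_def hard_rules_sat_part by simp
qed

lemma prob_stable_model_iff_max_hard_count:
  assumes "finite P" and "finite (SM P)" and "J0 \<in> SM P"
    and J0_max: "\<forall>J\<in>SM P. hard_count P J \<le> hard_count P J0"
  shows "prob_stable_model P I \<longleftrightarrow> I \<in> SM P \<and> hard_count P I = hard_count P J0"
proof (cases "I \<in> SM P")
  case False
  then have "Prob P I = Lim at_top (\<lambda>a::real. 0::real)"
    by (simp add: Prob_def Wt_def)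
  also have "\<dots> = 0"
    by (rule tendsto_Lim) auto
  finally show ?thesis
    using False by (simp add: prob_stable_model_def)
next
  case True
  let ?k = "\<lambda>J. real (hard_count P J)"
  let ?L = "\<lambda>J. if ?k J = ?k J0 then exp (soft_weight P J) else 0"
  note softmax = tendsto_softmax_at_top[OF assms(2,3) _ True, of ?k "soft_weight P"]
  have "((\<lambda>a. Wt P a I / (\<Sum>J\<in>SM P. Wt P a J)) \<longlongrightarrow> ?L I / sum ?L (SM P)) at_top"
    using softmax(1) J0_max True \<open>finite P\<close> by (simp add: Wt_eq_exp)
  then have "Prob P I = ?L I / sum ?L (SM P)"
    unfolding Prob_def by (rule tendsto_Lim[rotated]) simp
  then show ?thesis
    using softmax(2) J0_max True by (simp add: prob_stable_model_def)
qed

section \<open>Stable models\<close>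

lemma rsat_fact [simp]: "rsat I (fact a) \<longleftrightarrow> a \<in> I"
  by (simp add: rsat_def fact_def)

lemma rsat_constraint [simp]: "rsat I (constraint B N) \<longleftrightarrow> \<not> (B \<subseteq> I \<and> fsat I N)"
  by (simp add: rsat_def constraint_def)

lemma fsat_disj_list_Atom:
  "fsat I (disj_list (map (\<lambda>v. Atom (c, v)) vs)) \<longleftrightarrow> (\<exists>v\<in>set vs. (c, v) \<in> I)"
  by (induction vs) auto

lemma fm_atoms_disj_list_Atom:
  "fm_atoms (disj_list (map (\<lambda>v. Atom (c, v)) vs)) = (\<lambda>v. (c, v)) ` set vs"
  by (induction vs) auto

lemma set_dom_list: "finite (Dom c) \<Longrightarrow> set (dom_list Dom c) = Dom c"
  unfolding dom_list_def by (metis (mono_tags, lifting) finite_distinct_list someI_ex)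

lemma fsat_Int_atoms: "fm_atoms N \<subseteq> X \<Longrightarrow> fsat (I \<inter> X) N = fsat I N"
  by (induction N) auto

lemma rsat_Int_atoms: "rule_atoms R \<subseteq> X \<Longrightarrow> rsat (I \<inter> X) R = rsat I R"
  unfolding rsat_def rule_atoms_def by (auto simp: fsat_Int_atoms)

lemma reduct_Un: "reduct (P \<union> P') I = reduct P I \<union> reduct P' I"
  unfolding reduct_def by blast

lemma reduct_fact_image: "reduct (fact ` F) I = (\<lambda>a. ({a}, {})) ` F"
  unfolding reduct_def fact_def by force

lemma reduct_Int_atoms:
  "\<forall>R\<in>P. rule_atoms R \<subseteq> X \<Longrightarrow> reduct P (I \<inter> X) = reduct P I"
  unfolding reduct_def rule_atoms_def by (auto simp: fsat_Int_atoms)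

lemma pmodel_Un: "pmodel (Q \<union> Q') J \<longleftrightarrow> pmodel Q J \<and> pmodel Q' J"
  unfolding pmodel_def by auto

lemma pmodel_fact_image: "pmodel ((\<lambda>a. ({a}, {})) ` F) J \<longleftrightarrow> F \<subseteq> J"
  unfolding pmodel_def by auto

lemma pmodel_Int_atoms:
  "(\<And>A B. (A, B) \<in> Q \<Longrightarrow> A \<union> B \<subseteq> X) \<Longrightarrow> pmodel Q (J \<inter> X) \<longleftrightarrow> pmodel Q J"
  unfolding pmodel_def by fastforce

lemma pmodel_unsat_bodies:
  "(\<And>A B. (A, B) \<in> Q \<Longrightarrow> \<not> B \<subseteq> I) \<Longrightarrow> J \<subseteq> I \<Longrightarrow> pmodel Q J"
  unfolding pmodel_def by fastforce

lemma minimal_model_subset_heads: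
  assumes "minimal_model Q I"
  shows "I \<subseteq> \<Union>(fst ` Q)"
proof (rule ccontr)
  assume "\<not> I \<subseteq> \<Union>(fst ` Q)"
  then have "I \<inter> \<Union>(fst ` Q) \<subset> I" by blast
  moreover have "pmodel Q (I \<inter> \<Union>(fst ` Q))"
    using assms unfolding minimal_model_def pmodel_def by fastforce
  ultimately show False
    using assms unfolding minimal_model_def by blast
qed

lemma stable_model_rsat: "stable_model P I \<Longrightarrow> R \<in> P \<Longrightarrow> rsat I R"
  unfolding stable_model_def minimal_model_def pmodel_def reduct_def rsat_def by fastforce

lemma stable_model_Un_sat_constraints:
  assumes "\<forall>R\<in>C. head R = {} \<and> rsat I R"
  shows "stable_model (P \<union> C) I \<longleftrightarrow> stable_model P I"
proof -
  have unsat: "\<not> B \<subseteq> I" if "(A, B) \<in> reduct C I" for A B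
    using assms that unfolding reduct_def rsat_def by auto
  have eq: "pmodel (reduct (P \<union> C) I) J \<longleftrightarrow> pmodel (reduct P I) J" if "J \<subseteq> I" for J
    using pmodel_unsat_bodies[OF unsat that] by (simp add: reduct_Un pmodel_Un)
  have "pmodel (reduct (P \<union> C) I) I \<longleftrightarrow> pmodel (reduct P I) I"
    by (simp add: eq)
  moreover have "(\<forall>J\<subset>I. \<not> pmodel (reduct (P \<union> C) I) J) \<longleftrightarrow> (\<forall>J\<subset>I. \<not> pmodel (reduct P I) J)"
    using eq by blast
  ultimately show ?thesis
    unfolding stable_model_def minimal_model_def by blast
qed

text \<open>Facts outside the atoms \<open>X\<close> of \<open>P\<close> support only themselves, so they can be cut away.\<close>

lemma stable_model_Int_atoms:
  assumes atoms: "\<forall>R\<in>P. rule_atoms R \<subseteq> X" and stable: "stable_model (P \<union> fact ` F) I"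
  shows "stable_model (P \<union> fact ` (F \<inter> X)) (I \<inter> X)"
proof -
  let ?Q = "reduct P I"
  have Q_atoms: "A \<union> B \<subseteq> X" if "(A, B) \<in> ?Q" for A B
    using atoms that unfolding reduct_def rule_atoms_def by auto
  have reduct_I: "reduct (P \<union> fact ` F) I = ?Q \<union> (\<lambda>a. ({a}, {})) ` F"
    by (simp add: reduct_Un reduct_fact_image)
  have reduct_IX: "reduct (P \<union> fact ` (F \<inter> X)) (I \<inter> X) = ?Q \<union> (\<lambda>a. ({a}, {})) ` (F \<inter> X)"
    by (simp add: reduct_Un reduct_fact_image reduct_Int_atoms[OF atoms])
  have "pmodel ?Q I" and "F \<subseteq> I" and min: "\<And>J. J \<subset> I \<Longrightarrow> \<not> (pmodel ?Q J \<and> F \<subseteq> J)"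
    using stable unfolding stable_model_def minimal_model_def reduct_I pmodel_Un pmodel_fact_image
    by blast+
  then have "pmodel ?Q (I \<inter> X)" and "F \<inter> X \<subseteq> I \<inter> X"
    using pmodel_Int_atoms[OF Q_atoms] by blast+
  moreover have "\<not> (pmodel ?Q J \<and> F \<inter> X \<subseteq> J)" if J: "J \<subset> I \<inter> X" for J
  proof
    assume "pmodel ?Q J \<and> F \<inter> X \<subseteq> J"
    moreover have "(J \<union> (I - X)) \<inter> X = J"
      using J by blast
    ultimately have "pmodel ?Q (J \<union> (I - X))" and "F \<subseteq> J \<union> (I - X)"
      using pmodel_Int_atoms[OF Q_atoms, where J = "J \<union> (I - X)"] \<open>F \<subseteq> I\<close> by auto
    moreover have "J \<union> (I - X) \<subset> I"
      using J by blast
    ultimately show False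
      using min by blast
  qed
  ultimately show ?thesis
    unfolding stable_model_def minimal_model_def reduct_IX pmodel_Un pmodel_fact_image by blast
qed

section \<open>The translation \<open>T\<close> of a multi-valued probabilistic program\<close>

lemma mem_sig_atoms [simp]: "(c, v) \<in> sig_atoms Cs Dom \<longleftrightarrow> c \<in> Cs \<and> v \<in> Dom c"
  by (simp add: sig_atoms_def)

lemma head_constraints:
  "R \<in> uniq_constraints Cs Dom \<union> exist_constraints Pc Dom \<Longrightarrow> head R = {}"
  unfolding uniq_constraints_def exist_constraints_def constraint_def by auto

lemma eq_singleton_if_sum_eq_member:
  fixes f :: "'a \<Rightarrow> real"
  assumes "finite A" and "v \<in> A" and "\<forall>x\<in>A. 0 < f x" and "sum f A = f v"
  shows "A = {v}"
proof (rule ccontr)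
  assume "A \<noteq> {v}"
  then have "0 < sum f (A - {v})"
    using assms by (intro sum_pos) auto
  moreover have "sum f A = f v + sum f (A - {v})"
    using assms by (simp add: sum.remove)
  ultimately show False
    using assms(4) by simp
qed

locale mv_program =
  fixes Cs Pc :: "'c set" and Dom :: "'c \<Rightarrow> 'v set" and pr :: "'c \<Rightarrow> 'v \<Rightarrow> real"
    and Pi :: "('c \<times> 'v) rule set"
  assumes program: "mv_prob_program Cs Pc Dom pr Pi"
begin

abbreviation "T \<equiv> T_trans Cs Pc Dom pr Pi"
abbreviation "sig \<equiv> sig_atoms Cs Dom"
abbreviation "constraints \<equiv> uniq_constraints Cs Dom \<union> exist_constraints Pc Dom"

lemma Pc_subset: "Pc \<subseteq> Cs"
  using program by (simp add: mv_prob_program_def)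

lemma finite_Pc: "finite Pc"
  using program finite_subset[OF Pc_subset] by (simp add: mv_prob_program_def)

lemma finite_Pi: "finite Pi"
  using program by (simp add: mv_prob_program_def)

lemma finite_Dom: "c \<in> Cs \<Longrightarrow> finite (Dom c)"
  using program by (simp add: mv_prob_program_def)

lemma rule_atoms_Pi: "R \<in> Pi \<Longrightarrow> rule_atoms R \<subseteq> sig"
  using program by (simp add: mv_prob_program_def)

lemma head_Pi: "R \<in> Pi \<Longrightarrow> head R \<subseteq> sig"
  using rule_atoms_Pi by (auto simp: rule_atoms_def)

lemma finite_sig: "finite sig"
proof -
  have "sig = Sigma Cs Dom"
    by (auto simp: sig_atoms_def)
  then show ?thesis
    using program by (auto simp: mv_prob_program_def)
qed

lemma rule_atoms_constraints: "R \<in> constraints \<Longrightarrow> rule_atoms R \<subseteq> sig"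
  using Pc_subset finite_Dom
  by (auto simp: uniq_constraints_def exist_constraints_def constraint_def rule_atoms_def
      sig_atoms_def fm_atoms_disj_list_Atom set_dom_list)

lemma finite_constraints: "finite constraints"
proof -
  have "uniq_constraints Cs Dom \<subseteq> (\<lambda>(x, y). constraint {x, y} Top) ` (sig \<times> sig)"
    by (auto simp: uniq_constraints_def sig_atoms_def)
  then have "finite (uniq_constraints Cs Dom)"
    by (rule finite_subset) (simp add: finite_sig)
  moreover have "exist_constraints Pc Dom =
      (\<lambda>c. constraint {} (Neg (disj_list (map (\<lambda>v. Atom (c, v)) (dom_list Dom c))))) ` Pc"
    by (auto simp: exist_constraints_def)
  ultimately show ?thesis
    using finite_Pc by simp
qed

lemma finite_T: "finite T"
proof -
  have "T \<subseteq> (\<lambda>(c, v). (W (ln (pr c v)), fact (c, v))) ` sig \<union> (\<lambda>x. (Alpha, fact x)) ` sig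
      \<union> (\<lambda>x. (Alpha, constraint {x} Top)) ` sig \<union> Pair Alpha ` (Pi \<union> constraints)"
    using Pc_subset by (auto simp: T_trans_def sig_atoms_def)
  then show ?thesis
    by (rule finite_subset) (use finite_sig finite_constraints finite_Pi in auto)
qed

lemma head_T_subset: "(w, R) \<in> T \<Longrightarrow> head R \<subseteq> sig"
  using Pc_subset head_Pi head_constraints[of R Cs Dom Pc]
  by (auto simp: T_trans_def fact_def constraint_def)

lemma SM_T_subset:
  assumes "I \<in> SM T"
  shows "I \<subseteq> sig"
proof -
  have "I \<subseteq> \<Union>(fst ` reduct (snd ` sat_part T I) I)"
    using assms by (simp add: SM_def stable_model_def minimal_model_subset_heads)
  also have "\<dots> \<subseteq> sig"
    using head_T_subset by (force simp: reduct_def sat_part_def)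
  finally show ?thesis .
qed

lemma finite_SM_T: "finite (SM T)"
  using SM_T_subset finite_sig by (metis Pow_iff finite_Pow_iff finite_subset subsetI)

lemma consistent_Int_sig: "consistent Cs Pc Dom I \<Longrightarrow> consistent Cs Pc Dom (I \<inter> sig)"
  by (simp add: consistent_def rsat_Int_atoms rule_atoms_constraints)

lemma SM2_Int_sig:
  assumes "I \<in> SM2 Cs Pc Dom Pi"
  shows "I \<inter> sig \<in> SM2 Cs Pc Dom Pi"
proof -
  have "stable_model (Pi \<union> fact ` (TC Pc I \<inter> sig)) (I \<inter> sig)"
    using assms rule_atoms_Pi by (intro stable_model_Int_atoms) (auto simp: SM2_def)
  moreover have "TC Pc (I \<inter> sig) = TC Pc I \<inter> sig"
    by (auto simp: TC_def)
  ultimately show ?thesis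
    using assms by (simp add: SM2_def consistent_Int_sig)
qed

lemma consistent_has_value:
  assumes "consistent Cs Pc Dom I" and "c \<in> Pc"
  shows "\<exists>v\<in>Dom c. (c, v) \<in> I"
proof -
  let ?E = "constraint {} (Neg (disj_list (map (\<lambda>v. Atom (c, v)) (dom_list Dom c))))"
  have "?E \<in> exist_constraints Pc Dom"
    using assms(2) by (auto simp: exist_constraints_def)
  then have "rsat I ?E"
    using assms(1) unfolding consistent_def by blast
  then have "\<exists>v\<in>set (dom_list Dom c). (c, v) \<in> I"
    by (simp add: fsat_disj_list_Atom)
  moreover have "set (dom_list Dom c) = Dom c"
    using assms(2) Pc_subset by (intro set_dom_list finite_Dom) auto
  ultimately show ?thesis
    by simp
qed

end

locale positive_mv_program = mv_program +
  assumes pr_pos: "c \<in> Pc \<Longrightarrow> v \<in> Dom c \<Longrightarrow> 0 < pr c v"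
begin

lemma pr_neq_0: "c \<in> Pc \<Longrightarrow> v \<in> Dom c \<Longrightarrow> pr c v \<noteq> 0"
  using pr_pos by fastforce

lemma Dom_eq_singleton_if_pr_one:
  assumes "c \<in> Pc" and "v \<in> Dom c" and "pr c v = 1"
  shows "Dom c = {v}"
  using assms pr_pos Pc_subset finite_Dom program
  by (intro eq_singleton_if_sum_eq_member[of _ _ "pr c"]) (auto simp: mv_prob_program_def)

lemma consistent_pr_one:
  assumes "consistent Cs Pc Dom I" and "c \<in> Pc" and "v \<in> Dom c" and "pr c v = 1"
  shows "(c, v) \<in> I"
  using consistent_has_value[OF assms(1,2)] Dom_eq_singleton_if_pr_one[OF assms(2-4)] by auto

lemma hard_rules_T:
  "hard_rules T = Pi \<union> constraints \<union> {fact (c, v) | c v. c \<in> Pc \<and> v \<in> Dom c \<and> pr c v = 1}"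
  by (auto simp: hard_rules_def T_trans_def pr_neq_0)

lemma sat_hard_rules_T_iff:
  "(\<forall>R\<in>hard_rules T. rsat I R) \<longleftrightarrow> consistent Cs Pc Dom I \<and> (\<forall>R\<in>Pi. rsat I R)"
  using consistent_pr_one by (auto simp: hard_rules_T consistent_def)

lemma rules_T: "snd ` T = Pi \<union> constraints \<union> fact ` TC Pc sig"
proof
  show "snd ` T \<subseteq> Pi \<union> constraints \<union> fact ` TC Pc sig"
    using Pc_subset by (auto simp: T_trans_def TC_def pr_neq_0)
  have "fact x \<in> snd ` T" if x_TC: "x \<in> TC Pc sig" for x
  proof -
    obtain c v where x: "x = (c, v)" "c \<in> Pc" "v \<in> Dom c"
      using x_TC by (auto simp: TC_def)
    then have "0 < pr c v" and "pr c v \<le> 1"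
      using pr_pos program by (auto simp: mv_prob_program_def)
    then have "pr c v < 1 \<or> pr c v = 1"
      by linarith
    then have "(W (ln (pr c v)), fact x) \<in> T \<or> (Alpha, fact x) \<in> T"
      using x \<open>0 < pr c v\<close> unfolding T_trans_def by blast
    then show ?thesis
      by force
  qed
  moreover have "Pi \<union> constraints \<subseteq> snd ` T"
    by (force simp: T_trans_def)
  ultimately show "Pi \<union> constraints \<union> fact ` TC Pc sig \<subseteq> snd ` T"
    by blast
qed

lemma sat_rules_T:
  assumes "I \<subseteq> sig" and "consistent Cs Pc Dom I" and "\<forall>R\<in>Pi. rsat I R"
  shows "snd ` sat_part T I = Pi \<union> fact ` TC Pc I \<union> constraints"
proof -
  have "{R \<in> fact ` TC Pc sig. rsat I R} = fact ` TC Pc I"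
    using assms(1) by (force simp: TC_def)
  then show ?thesis
    using assms(2,3) unfolding snd_image_sat_part rules_T consistent_def by blast
qed

lemma SM_T_iff_stable_model:
  assumes "I \<subseteq> sig" and "consistent Cs Pc Dom I" and "\<forall>R\<in>Pi. rsat I R"
  shows "I \<in> SM T \<longleftrightarrow> stable_model (Pi \<union> fact ` TC Pc I) I"
proof -
  have "\<forall>R\<in>constraints. head R = {} \<and> rsat I R"
    using assms(2) head_constraints[of _ Cs Dom Pc] by (auto simp: consistent_def)
  then show ?thesis
    by (simp add: SM_def sat_rules_T[OF assms] stable_model_Un_sat_constraints)
qed

lemma SM2_iff_SM_T_sat_hard_rules:
  assumes "I \<subseteq> sig"
  shows "I \<in> SM2 Cs Pc Dom Pi \<longleftrightarrow> I \<in> SM T \<and> (\<forall>R\<in>hard_rules T. rsat I R)"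
  using SM_T_iff_stable_model[OF assms] sat_hard_rules_T_iff stable_model_rsat
  by (auto simp: SM2_def)

end

theorem lemma8:
  fixes Cs Pc :: "'c set" and Dom :: "'c \<Rightarrow> 'v set" and pr :: "'c \<Rightarrow> 'v \<Rightarrow> real"
    and Pi :: "('c \<times> 'v) rule set"
  assumes "mv_prob_program Cs Pc Dom pr Pi"
    and "SM2 Cs Pc Dom Pi \<noteq> {}"
    and "\<forall>c \<in> Pc. \<forall>v \<in> Dom c. pr c v > 0"
  shows "\<forall>I. I \<subseteq> sig_atoms Cs Dom \<longrightarrow>
           (prob_stable_model (T_trans Cs Pc Dom pr Pi) I \<longleftrightarrow> I \<in> SM2 Cs Pc Dom Pi)"
proof -
  interpret positive_mv_program Cs Pc Dom pr Pi
    using assms(1,3) by unfold_locales auto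
  obtain J0 where "J0 \<in> SM2 Cs Pc Dom Pi"
    using assms(2) by blast
  then have "J0 \<inter> sig \<in> SM T" and J0_hard: "hard_count T (J0 \<inter> sig) = card (hard_rules T)"
    using SM2_Int_sig SM2_iff_SM_T_sat_hard_rules hard_count_eq_card_iff[OF finite_T] by auto
  moreover have "\<forall>J\<in>SM T. hard_count T J \<le> hard_count T (J0 \<inter> sig)"
    using hard_count_le[OF finite_T] J0_hard by simp
  ultimately have "prob_stable_model T I \<longleftrightarrow> I \<in> SM T \<and> hard_count T I = card (hard_rules T)" for I
    by (simp add: prob_stable_model_iff_max_hard_count[OF finite_T finite_SM_T])
  then show ?thesis
    using SM2_iff_SM_T_sat_hard_rules hard_count_eq_card_iff[OF finite_T] by simp
qed

end
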